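(* Let $d\ge1$ and let $\mu$ be the probability measure on $\mathbb{R}^d$ given by $\mathrm{d}\mu(x)=\rho(|x|)\,\mathrm{d}x$ with $\rho:[0,\infty)\to(0,\infty)$ continuous. Then for every $f\in\mathcal{C}_d$ and every closed ball $B$ centered at the origin, $$\int_{\mathbb{R}^d} f\,\mathbf{1}_B\,\mathrm{d}\mu\ \ge\ \Big(\int_{\mathbb{R}^d} f\,\mathrm{d}\mu\Big)\,\mu(B).$$
   Context: $\mathcal{C}_d$ denotes the set of continuous compactly supported functions $f:\mathbb{R}^d\to[0,\infty)$ such that for every $c>0$ the superlevel set $\{x: f(x)>c\}$ is convex, and $f(x)\le f(0)$ for all $x\in\mathbb{R}^d$. *)

theory Defs
  imports "HOL-Probability.Probability"
begin

text \<open>R^d is modelled by a Euclidean space type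
  'a with d = DIM('a).\<close>

definition class_C :: "('a::euclidean_space \<Rightarrow> real) set" where
  "class_C = {f. continuous_on UNIV f
              \<and> compact (closure {x. f x \<noteq> 0})
              \<and> (\<forall>x. 0 \<le> f x)
              \<and> (\<forall>c>0. convex {x. f x > c})
              \<and> (\<forall>x. f x \<le> f 0)}"

definition radial_measure :: "(real \<Rightarrow> real) \<Rightarrow> 'a::euclidean_space measure" where
  "radial_measure \<rho> = density lborel (\<lambda>x. ennreal (\<rho> (norm x)))"

end

theory Submission
  imports Defs
begin

(* Split f = f 1_B + f 1_(-B) with B = cball 0 r.  Since mu(B) + mu(-B) = 1,
   the claim is equivalent to the cross inequality
       (integral of f over -B) * mu(B)  <=  (integral of f over B) * mu(-B).
   We prove it in polar coordinates.  Every nonnegative integral over R^d is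
       d * integral over the unit ball of the ray integral  int_0^oo h(t u) t^(d-1) dt,
   u = sgn x the direction of x (lborel_polar; it is obtained by Fubini from a scaling
   argument, without any surface measure).  Along each ray the convexity of the
   superlevel sets and the peak at the origin make f nonincreasing, so on the ray
   f >= f(r u) inside B and f <= f(r u) outside B; this gives the cross inequality ray
   by ray (nn_integral_antimono_split).  Because the density is radial, the mu-mass of
   B and of -B along a ray does not depend on the direction, and integrating over the
   directions yields the cross inequality for mu (radial_measure_cross_inequality). *)

lemma nn_integral_lborel_scale:
  fixes h :: "'a::euclidean_space \<Rightarrow> ennreal"
  assumes [measurable]: "h \<in> borel_measurable borel" and c: "c \<noteq> 0"
  shows "(\<integral>\<^sup>+x. h x \<partial>lborel) = ennreal (\<bar>c\<bar> ^ DIM('a)) * (\<integral>\<^sup>+x. h (c *\<^sub>R x) \<partial>lborel)"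
  by (subst lborel_affine[OF c, of 0])
     (simp add: nn_integral_density nn_integral_distr nn_integral_cmult)

lemma nn_integral_power_tail:
  fixes a :: real
  assumes a: "0 < a" and n: "0 < n"
  shows "(\<integral>\<^sup>+s. ennreal (1 / s ^ Suc n) * indicator {a..} s \<partial>lborel) = ennreal (1 / (real n * a ^ n))"
proof -
  let ?F = "\<lambda>s::real. - 1 / (real n * s ^ n)"
  have "(\<integral>\<^sup>+s. ennreal (if 0 < s then 1 / s ^ Suc n else 0) * indicator {a..} s \<partial>lborel)
      = ennreal (0 - ?F a)"
  proof (rule nn_integral_FTC_atLeast)
    fix x assume "a \<le> x"
    then have x: "0 < x" using a by linarith
    have "(?F has_real_derivative 1 / x ^ Suc n) (at x)"
      using x n by (auto intro!: derivative_eq_intros) (cases n, auto simp: field_simps)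
    then show "(?F has_real_derivative (if 0 < x then 1 / x ^ Suc n else 0)) (at x)"
      using x by simp
    show "0 \<le> (if 0 < x then 1 / x ^ Suc n else 0)" using x by simp
  next
    show "(?F \<longlongrightarrow> 0) at_top" using n by real_asymp
  qed simp
  moreover have "(\<integral>\<^sup>+s. ennreal (if 0 < s then 1 / s ^ Suc n else 0) * indicator {a..} s \<partial>lborel)
      = (\<integral>\<^sup>+s. ennreal (1 / s ^ Suc n) * indicator {a..} s \<partial>lborel)"
    using a by (intro nn_integral_cong) (auto split: split_indicator)
  ultimately show ?thesis by simp
qed

(* The kernel that appears after exchanging the order of integration in the polar formula
   integrates to 1/d over the scale parameter s, for every y other than 0. *)
lemma nn_integral_shell_kernel:
  fixes y :: "'a::euclidean_space"
  assumes "y \<noteq> 0"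
  shows "(\<integral>\<^sup>+s. indicator {0<..} s * indicator (ball 0 s) y * ennreal (norm y ^ DIM('a) / s ^ Suc DIM('a)) \<partial>lborel)
       = ennreal (1 / real DIM('a))"
proof -
  let ?n = "DIM('a)"
  define a where "a = norm y"
  have a: "0 < a" using assms by (simp add: a_def)
  have "(\<integral>\<^sup>+s. indicator {0<..} s * indicator (ball 0 s) y * ennreal (norm y ^ ?n / s ^ Suc ?n) \<partial>lborel)
      = (\<integral>\<^sup>+s. ennreal (a ^ ?n) * (ennreal (1 / s ^ Suc ?n) * indicator {a..} s) \<partial>lborel)"
    using AE_lborel_singleton[of a]
  proof (intro nn_integral_cong_AE, eventually_elim)
    case (elim s)
    show ?case
    proof (cases "a < s")
      case True
      then have s: "0 < s" using a by linarith
      have "ennreal (a ^ ?n) * ennreal (1 / s ^ Suc ?n) = ennreal (a ^ ?n / s ^ Suc ?n)"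
        using a s by (subst ennreal_mult[symmetric]) auto
      then show ?thesis using True s by (simp add: a_def indicator_def)
    next
      case False
      then show ?thesis using elim by (auto simp: a_def split: split_indicator)
    qed
  qed
  also have "\<dots> = ennreal (a ^ ?n) * ennreal (1 / (real ?n * a ^ ?n))"
    using nn_integral_power_tail[OF a, of ?n] by (subst nn_integral_cmult) auto
  also have "\<dots> = ennreal (1 / real ?n)"
    using a by (simp add: ennreal_mult[symmetric])
  finally show ?thesis .
qed

(* Polar decomposition, scaled form: the point y is written as s x with x in the unit ball
   and s > 0.  Proof: exchange the integrals, substitute y = s x, exchange back and use
   nn_integral_shell_kernel. *)
lemma lborel_polar_scaled:
  fixes h :: "'a::euclidean_space \<Rightarrow> ennreal"
  assumes [measurable]: "h \<in> borel_measurable borel"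
  shows "(\<integral>\<^sup>+y. h y \<partial>lborel) = of_nat DIM('a) *
    (\<integral>\<^sup>+x. indicator (ball 0 1) x *
        (\<integral>\<^sup>+s. indicator {0<..} s * h (s *\<^sub>R x) * ennreal ((s * norm x) ^ DIM('a) / s) \<partial>lborel) \<partial>lborel)"
proof -
  let ?n = "DIM('a)"
  define K where "K x s = indicator (ball 0 1) x *
    (indicator {0<..} s * h (s *\<^sub>R x) * ennreal ((s * norm x) ^ ?n / s))" for x :: 'a and s :: real
  define G where "G y s = h y *
    (indicator {0<..} s * indicator (ball 0 s) y * ennreal (norm y ^ ?n / s ^ Suc ?n))" for y :: 'a and s :: real
  have [measurable]: "Measurable.pred (borel \<Otimes>\<^sub>M borel) (\<lambda>p::'a \<times> real. fst p \<in> ball 0 1)"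
    "Measurable.pred (borel \<Otimes>\<^sub>M borel) (\<lambda>p::'a \<times> real. fst p \<in> ball 0 (snd p))"
    unfolding mem_ball by measurable
  have [measurable]: "(\<lambda>s::real. indicator (ball 0 s) y :: ennreal) \<in> borel_measurable borel" for y :: 'a
    unfolding indicator_def mem_ball by measurable
  have K_meas[measurable]: "case_prod K \<in> borel_measurable (lborel \<Otimes>\<^sub>M lborel)"
    and G_meas[measurable]: "case_prod G \<in> borel_measurable (lborel \<Otimes>\<^sub>M lborel)"
    unfolding K_def G_def by measurable
  (* Substituting y = s x turns the integral over the unit ball into one over ball 0 s. *)
  have scale: "(\<integral>\<^sup>+x. K x s \<partial>lborel) = (\<integral>\<^sup>+y. G y s \<partial>lborel)" for s
  proof (cases "0 < s")
    case False
    then show ?thesis by (simp add: K_def G_def)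
  next
    case s: True
    have "(\<integral>\<^sup>+y. G y s \<partial>lborel) = (\<integral>\<^sup>+x. ennreal (s ^ ?n) * G (s *\<^sub>R x) s \<partial>lborel)"
      using s by (subst nn_integral_lborel_scale[of _ s]) (auto simp: nn_integral_cmult)
    also have "\<dots> = (\<integral>\<^sup>+x. K x s \<partial>lborel)"
    proof (rule nn_integral_cong)
      fix x :: 'a
      have "ennreal (s ^ ?n) * ennreal ((s * norm x) ^ ?n / s ^ Suc ?n) = ennreal ((s * norm x) ^ ?n / s)"
        using s by (subst ennreal_mult[symmetric]) (auto simp: field_simps)
      moreover have "(s *\<^sub>R x \<in> ball 0 s) = (x \<in> ball 0 1)" using s by simp
      ultimately show "ennreal (s ^ ?n) * G (s *\<^sub>R x) s = K x s"
        using s unfolding G_def K_def by (auto simp: abs_mult mult_ac split: split_indicator)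
    qed
    finally show ?thesis ..
  qed
  have "(\<integral>\<^sup>+x. indicator (ball 0 1) x *
        (\<integral>\<^sup>+s. indicator {0<..} s * h (s *\<^sub>R x) * ennreal ((s * norm x) ^ ?n / s) \<partial>lborel) \<partial>lborel)
      = (\<integral>\<^sup>+x. (\<integral>\<^sup>+s. K x s \<partial>lborel) \<partial>lborel)"
    unfolding K_def by (intro nn_integral_cong, subst nn_integral_cmult) auto
  also have "\<dots> = (\<integral>\<^sup>+s. (\<integral>\<^sup>+x. K x s \<partial>lborel) \<partial>lborel)"
    by (rule lborel_pair.Fubini'[symmetric]) (rule K_meas)
  also have "\<dots> = (\<integral>\<^sup>+s. (\<integral>\<^sup>+y. G y s \<partial>lborel) \<partial>lborel)"
    by (simp only: scale)
  also have "\<dots> = (\<integral>\<^sup>+y. (\<integral>\<^sup>+s. G y s \<partial>lborel) \<partial>lborel)"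
    by (rule lborel_pair.Fubini') (rule G_meas)
  also have "\<dots> = (\<integral>\<^sup>+y. h y * ennreal (1 / real ?n) \<partial>lborel)"
  proof (rule nn_integral_cong_AE)
    have "(\<integral>\<^sup>+s. G y s \<partial>lborel) = h y * ennreal (1 / real ?n)" if "y \<noteq> 0" for y
      unfolding G_def by (subst nn_integral_cmult) (simp_all only: nn_integral_shell_kernel[OF that], measurable)
    then show "AE y in lborel. (\<integral>\<^sup>+s. G y s \<partial>lborel) = h y * ennreal (1 / real ?n)"
      using AE_lborel_singleton[of 0] by (auto elim!: eventually_mono)
  qed
  also have "\<dots> = (\<integral>\<^sup>+y. h y \<partial>lborel) * ennreal (1 / real ?n)"
    by (rule nn_integral_multc) measurable
  finally have "of_nat ?n * (\<integral>\<^sup>+x. indicator (ball 0 1) x *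
        (\<integral>\<^sup>+s. indicator {0<..} s * h (s *\<^sub>R x) * ennreal ((s * norm x) ^ ?n / s) \<partial>lborel) \<partial>lborel)
      = (\<integral>\<^sup>+y. h y \<partial>lborel) * (of_nat ?n * ennreal (1 / real ?n))"
    by (simp add: mult_ac)
  also have "of_nat ?n * ennreal (1 / real ?n) = 1"
    by (simp add: ennreal_of_nat_eq_real_of_nat ennreal_mult[symmetric])
  finally show ?thesis by simp
qed

lemma nn_integral_ray_rescale:
  fixes g :: "real \<Rightarrow> ennreal"
  assumes [measurable]: "g \<in> borel_measurable borel" and c: "0 < c" and n: "0 < n"
  shows "(\<integral>\<^sup>+s. indicator {0<..} s * g (s * c) * ennreal ((s * c) ^ n / s) \<partial>lborel)
       = (\<integral>\<^sup>+t. indicator {0<..} t * g t * ennreal (t ^ (n - 1)) \<partial>lborel)"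
proof -
  have "(\<integral>\<^sup>+t. indicator {0<..} t * g t * ennreal (t ^ (n - 1)) \<partial>lborel)
      = ennreal c * (\<integral>\<^sup>+s. indicator {0<..} (c * s) * g (c * s) * ennreal ((c * s) ^ (n - 1)) \<partial>lborel)"
    using c nn_integral_real_affine[of "\<lambda>t. indicator {0<..} t * g t * ennreal (t ^ (n - 1))" c 0]
    by simp
  also have "\<dots> = (\<integral>\<^sup>+s. indicator {0<..} s * g (s * c) * ennreal ((s * c) ^ n / s) \<partial>lborel)"
  proof (subst nn_integral_cmult[symmetric], measurable, rule nn_integral_cong)
    fix s :: real
    show "ennreal c * (indicator {0<..} (c * s) * g (c * s) * ennreal ((c * s) ^ (n - 1)))
        = indicator {0<..} s * g (s * c) * ennreal ((s * c) ^ n / s)"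
    proof (cases "0 < s")
      case s: True
      have "(s * c) ^ n / s = c * (c * s) ^ (n - 1)"
        using s n by (cases n) (auto simp: field_simps)
      then have "ennreal c * ennreal ((c * s) ^ (n - 1)) = ennreal ((s * c) ^ n / s)"
        using c s by (simp add: ennreal_mult[symmetric])
      then show ?thesis
        using c s by (simp add: mult.left_commute[of "ennreal c"] mult.commute[of s c])
    qed (use c in \<open>auto simp: zero_less_mult_iff\<close>)
  qed
  finally show ?thesis ..
qed

definition ray_integral :: "('a::euclidean_space \<Rightarrow> ennreal) \<Rightarrow> 'a \<Rightarrow> ennreal" where
  "ray_integral h u = (\<integral>\<^sup>+t. indicator {0<..} t * h (t *\<^sub>R u) * ennreal (t ^ (DIM('a) - 1)) \<partial>lborel)"

lemma lborel_polar:
  fixes h :: "'a::euclidean_space \<Rightarrow> ennreal"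
  assumes [measurable]: "h \<in> borel_measurable borel"
  shows "(\<integral>\<^sup>+y. h y \<partial>lborel) = of_nat DIM('a) *
    (\<integral>\<^sup>+x. indicator (ball 0 1) x * ray_integral h (sgn x) \<partial>lborel)"
proof -
  have "(\<integral>\<^sup>+s. indicator {0<..} s * h (s *\<^sub>R x) * ennreal ((s * norm x) ^ DIM('a) / s) \<partial>lborel)
      = ray_integral h (sgn x)" if x: "x \<noteq> 0" for x :: 'a
  proof -
    have "s *\<^sub>R x = (s * norm x) *\<^sub>R sgn x" for s
      using x by (simp add: sgn_div_norm)
    then show ?thesis
      unfolding ray_integral_def using x
      by (simp only:) (rule nn_integral_ray_rescale[where g = "\<lambda>t. h (t *\<^sub>R sgn x)"], auto)
  qed
  then have "(\<integral>\<^sup>+x. indicator (ball 0 1) x *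
        (\<integral>\<^sup>+s. indicator {0<..} s * h (s *\<^sub>R x) * ennreal ((s * norm x) ^ DIM('a) / s) \<partial>lborel) \<partial>lborel)
      = (\<integral>\<^sup>+x. indicator (ball 0 1) x * ray_integral h (sgn x) \<partial>lborel)"
    using AE_lborel_singleton[of 0] by (intro nn_integral_cong_AE) (auto elim!: eventually_mono)
  then show ?thesis by (simp only: lborel_polar_scaled[OF assms])
qed

lemma ray_integral_measurable [measurable]:
  fixes h :: "'a::euclidean_space \<Rightarrow> ennreal"
  assumes [measurable]: "h \<in> borel_measurable borel"
  shows "ray_integral h \<in> borel_measurable borel"
  unfolding ray_integral_def by measurable

lemma lborel_polar_cross_inequality:
  fixes h1 h2 k1 k2 :: "'a::euclidean_space \<Rightarrow> ennreal"
  assumes [measurable]: "h1 \<in> borel_measurable borel" "h2 \<in> borel_measurable borel"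
      "k1 \<in> borel_measurable borel" "k2 \<in> borel_measurable borel"
    and k1: "\<And>u. norm u = 1 \<Longrightarrow> ray_integral k1 u = P"
    and k2: "\<And>u. norm u = 1 \<Longrightarrow> ray_integral k2 u = Q"
    and rays: "\<And>u. norm u = 1 \<Longrightarrow> ray_integral h2 u * P \<le> ray_integral h1 u * Q"
  shows "(\<integral>\<^sup>+y. h2 y \<partial>lborel) * (\<integral>\<^sup>+y. k1 y \<partial>lborel) \<le> (\<integral>\<^sup>+y. h1 y \<partial>lborel) * (\<integral>\<^sup>+y. k2 y \<partial>lborel)"
proof -
  let ?n = "of_nat DIM('a) :: ennreal"
  let ?R = "\<lambda>h. (\<integral>\<^sup>+x. indicator (ball 0 1) x * ray_integral h (sgn x) \<partial>lborel)"
  define V where "V = (\<integral>\<^sup>+x. indicator (ball (0::'a) 1) x \<partial>lborel)"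
  have [measurable]: "ball (0::'a) 1 \<in> sets borel" by simp
  have unit: "AE x in lborel. norm (sgn (x::'a)) = 1"
    using AE_lborel_singleton[of "0::'a"] by (auto elim!: eventually_mono simp: norm_sgn)
  have constant_rays: "(\<integral>\<^sup>+y. k y \<partial>lborel) = ?n * V * c"
    if [measurable]: "k \<in> borel_measurable borel" and k: "\<And>u. norm u = 1 \<Longrightarrow> ray_integral k u = c"
    for k :: "'a \<Rightarrow> ennreal" and c
  proof -
    have "?R k = (\<integral>\<^sup>+x. indicator (ball (0::'a) 1) x * c \<partial>lborel)"
      using unit by (intro nn_integral_cong_AE) (auto elim!: eventually_mono simp: k)
    also have "\<dots> = V * c" unfolding V_def by (rule nn_integral_multc) measurable
    finally show ?thesis by (simp add: lborel_polar[OF that(1)] mult.assoc)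
  qed
  have "(\<integral>\<^sup>+y. h2 y \<partial>lborel) * (\<integral>\<^sup>+y. k1 y \<partial>lborel) = ?n * ?n * V * (?R h2 * P)"
    by (simp add: lborel_polar[of h2] constant_rays[OF _ k1] mult_ac)
  also have "?R h2 * P = (\<integral>\<^sup>+x. indicator (ball 0 1) x * ray_integral h2 (sgn x) * P \<partial>lborel)"
    by (rule nn_integral_multc[symmetric]) measurable
  also have "\<dots> \<le> (\<integral>\<^sup>+x. indicator (ball 0 1) x * ray_integral h1 (sgn x) * Q \<partial>lborel)"
    using unit by (intro nn_integral_mono_AE)
      (auto elim!: eventually_mono simp: mult.assoc intro!: mult_left_mono rays)
  also have "\<dots> = ?R h1 * Q"
    by (rule nn_integral_multc) measurable
  also have "?n * ?n * V * \<dots> = (\<integral>\<^sup>+y. h1 y \<partial>lborel) * (\<integral>\<^sup>+y. k2 y \<partial>lborel)"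
    by (simp add: lborel_polar[of h1] constant_rays[OF _ k2] mult_ac)
  finally show ?thesis by (simp add: mult_left_mono)
qed

(* One-dimensional cross inequality: for g nonincreasing on (0,oo) and any weight omega,
   the average of g beyond r is at most g r, which is at most its average on (0,r]. *)
lemma nn_integral_antimono_split:
  fixes g \<omega> :: "real \<Rightarrow> ennreal"
  assumes [measurable]: "\<omega> \<in> borel_measurable borel" and r: "0 < r"
    and g: "\<And>s t. 0 < s \<Longrightarrow> s \<le> t \<Longrightarrow> g t \<le> g s"
  shows "(\<integral>\<^sup>+t. indicator {r<..} t * g t * \<omega> t \<partial>lborel) * (\<integral>\<^sup>+t. indicator {0<..r} t * \<omega> t \<partial>lborel)
       \<le> (\<integral>\<^sup>+t. indicator {0<..r} t * g t * \<omega> t \<partial>lborel) * (\<integral>\<^sup>+t. indicator {r<..} t * \<omega> t \<partial>lborel)"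
    (is "?C * ?P \<le> ?A * ?Q")
proof -
  have "?C \<le> (\<integral>\<^sup>+t. g r * (indicator {r<..} t * \<omega> t) \<partial>lborel)"
    using r by (intro nn_integral_mono) (auto split: split_indicator intro!: mult_right_mono g)
  also have "\<dots> = g r * ?Q" by (rule nn_integral_cmult) measurable
  finally have upper: "?C \<le> g r * ?Q" .
  have "g r * ?P = (\<integral>\<^sup>+t. g r * (indicator {0<..r} t * \<omega> t) \<partial>lborel)"
    by (rule nn_integral_cmult[symmetric]) measurable
  also have "\<dots> \<le> ?A"
    by (intro nn_integral_mono) (auto split: split_indicator intro!: mult_right_mono g)
  finally have lower: "g r * ?P \<le> ?A" .
  have "?C * ?P \<le> g r * ?Q * ?P" using upper by (rule mult_right_mono) simp
  also have "\<dots> = (g r * ?P) * ?Q" by (simp add: mult_ac)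
  also have "\<dots> \<le> ?A * ?Q" using lower by (rule mult_right_mono) simp
  finally show ?thesis .
qed

lemma superlevel_convex_ray_antimono:
  fixes f :: "'a::real_vector \<Rightarrow> real"
  assumes nonneg: "\<And>x. 0 \<le> f x" and convex: "\<And>c. 0 < c \<Longrightarrow> convex {x. f x > c}"
    and peak: "\<And>x. f x \<le> f 0" and st: "0 \<le> s" "s \<le> t"
  shows "f (t *\<^sub>R x) \<le> f (s *\<^sub>R x)"
proof (rule ccontr)
  assume "\<not> ?thesis"
  then have less: "f (s *\<^sub>R x) < f (t *\<^sub>R x)" by simp
  define c where "c = (f (s *\<^sub>R x) + f (t *\<^sub>R x)) / 2"
  have c: "0 < c" using less nonneg[of "s *\<^sub>R x"] by (simp add: c_def)
  have t: "0 < t" using st less by (cases "t = 0") auto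
  have "t *\<^sub>R x \<in> {x. f x > c}" and "0 \<in> {x. f x > c}"
    using less peak[of "t *\<^sub>R x"] by (simp_all add: c_def)
  then have "(s / t) *\<^sub>R (t *\<^sub>R x) + (1 - s / t) *\<^sub>R 0 \<in> {x. f x > c}"
    by (rule convexD[OF convex[OF c]]) (use st t in auto)
  then have "f (s *\<^sub>R x) > c" using t by simp
  then show False using less by (simp add: c_def)
qed

lemma ray_integral_radial:
  fixes u :: "'a::euclidean_space" and w :: "real \<Rightarrow> real"
  assumes u: "norm u = 1" and r: "0 \<le> r"
  shows "ray_integral (\<lambda>y. h y * indicator (cball 0 r) y * ennreal (w (norm y))) u
           = (\<integral>\<^sup>+t. indicator {0<..r} t * h (t *\<^sub>R u) * (ennreal (w t) * ennreal (t ^ (DIM('a) - 1))) \<partial>lborel)"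
    and "ray_integral (\<lambda>y. h y * indicator (- cball 0 r) y * ennreal (w (norm y))) u
           = (\<integral>\<^sup>+t. indicator {r<..} t * h (t *\<^sub>R u) * (ennreal (w t) * ennreal (t ^ (DIM('a) - 1))) \<partial>lborel)"
  unfolding ray_integral_def using u r
  by (auto intro!: nn_integral_cong simp: mult_ac split: split_indicator)

lemma radial_measure_cross_inequality:
  fixes w :: "real \<Rightarrow> real" and f :: "'a::euclidean_space \<Rightarrow> real"
  assumes [measurable]: "w \<in> borel_measurable borel" "f \<in> borel_measurable borel"
    and r: "0 < r"
    and ray_antimono: "\<And>x s t. 0 < s \<Longrightarrow> s \<le> t \<Longrightarrow> f (t *\<^sub>R x) \<le> f (s *\<^sub>R x)"
  shows "(\<integral>\<^sup>+x. ennreal (f x) * indicator (- cball 0 r) x \<partial>radial_measure w)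
           * emeasure (radial_measure w) (cball (0::'a) r)
       \<le> (\<integral>\<^sup>+x. ennreal (f x) * indicator (cball 0 r) x \<partial>radial_measure w)
           * emeasure (radial_measure w) (- cball (0::'a) r)"
proof -
  let ?B = "cball (0::'a) r"
  let ?\<omega> = "\<lambda>t. ennreal (w t) * ennreal (t ^ (DIM('a) - 1))"
  let ?weighted = "\<lambda>h y. h y * ennreal (w (norm y))"
  have density: "(\<integral>\<^sup>+y. h y \<partial>radial_measure w) = (\<integral>\<^sup>+y. ?weighted h y \<partial>lborel)"
    if [measurable]: "h \<in> borel_measurable borel" for h :: "'a \<Rightarrow> ennreal"
    unfolding radial_measure_def by (simp add: nn_integral_density mult_ac)
  have emeasure_weighted:
    "emeasure (radial_measure w) A = (\<integral>\<^sup>+y. ?weighted (\<lambda>y. 1 * indicator A y) y \<partial>lborel)"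
    if [measurable]: "A \<in> sets borel" for A :: "'a set"
    by (simp add: density[symmetric] radial_measure_def)
  have ray_sets:
    "ray_integral (?weighted (\<lambda>y. 1 * indicator ?B y)) u
       = (\<integral>\<^sup>+t. indicator {0<..r} t * 1 * ?\<omega> t \<partial>lborel)"
    "ray_integral (?weighted (\<lambda>y. 1 * indicator (- ?B) y)) u
       = (\<integral>\<^sup>+t. indicator {r<..} t * 1 * ?\<omega> t \<partial>lborel)"
    if "norm u = 1" for u
    using ray_integral_radial[OF that, of r "\<lambda>_. 1" w] r by auto
  have ray_compare:
    "ray_integral (?weighted (\<lambda>y. ennreal (f y) * indicator (- ?B) y)) u
       * (\<integral>\<^sup>+t. indicator {0<..r} t * 1 * ?\<omega> t \<partial>lborel)
     \<le> ray_integral (?weighted (\<lambda>y. ennreal (f y) * indicator ?B y)) u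
       * (\<integral>\<^sup>+t. indicator {r<..} t * 1 * ?\<omega> t \<partial>lborel)"
    if "norm u = 1" for u
    unfolding ray_integral_radial[OF that less_imp_le[OF r], where h = "\<lambda>y. ennreal (f y)" and w = w]
    using nn_integral_antimono_split[of ?\<omega> r "\<lambda>t. ennreal (f (t *\<^sub>R u))"] r ray_antimono
    by (simp add: ennreal_leI)
  have integral_weighted: "(\<integral>\<^sup>+x. ennreal (f x) * indicator A x \<partial>radial_measure w)
      = (\<integral>\<^sup>+y. ?weighted (\<lambda>y. ennreal (f y) * indicator A y) y \<partial>lborel)"
    if "A \<in> sets borel" for A :: "'a set"
    by (rule density) (use that in measurable)
  have B_sets[measurable]: "?B \<in> sets borel" "- ?B \<in> sets borel" by auto
  show ?thesis
    unfolding integral_weighted[OF B_sets(1)] integral_weighted[OF B_sets(2)]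
      emeasure_weighted[OF B_sets(1)] emeasure_weighted[OF B_sets(2)]
    by (rule lborel_polar_cross_inequality[OF _ _ _ _ ray_sets ray_compare]; measurable)
qed

lemma prob_space_cross_criterion:
  fixes f :: "'a \<Rightarrow> real"
  assumes "prob_space M" and f: "integrable M f" "\<And>x. 0 \<le> f x" and B: "B \<in> sets M"
    and cross: "(\<integral>\<^sup>+x. ennreal (f x) * indicator (space M - B) x \<partial>M) * emeasure M B
      \<le> (\<integral>\<^sup>+x. ennreal (f x) * indicator B x \<partial>M) * emeasure M (space M - B)"
  shows "(\<integral>x. f x \<partial>M) * measure M B \<le> (\<integral>x. f x * indicator B x \<partial>M)"
proof -
  interpret prob_space M by fact
  have B': "space M - B \<in> sets M" using B by auto
  define a where "a = (\<integral>x. f x * indicator B x \<partial>M)"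
  define c where "c = (\<integral>x. f x * indicator (space M - B) x \<partial>M)"
  define m where "m = measure M B"
  have nn_eq: "(\<integral>\<^sup>+x. ennreal (f x) * indicator A x \<partial>M) = ennreal (\<integral>x. f x * indicator A x \<partial>M)"
    if "A \<in> sets M" for A
  proof -
    have "(\<integral>\<^sup>+x. ennreal (f x) * indicator A x \<partial>M) = (\<integral>\<^sup>+x. ennreal (f x * indicator A x) \<partial>M)"
      by (intro nn_integral_cong) (simp split: split_indicator)
    also have "\<dots> = ennreal (\<integral>x. f x * indicator A x \<partial>M)"
      by (rule nn_integral_eq_integral) (use f that in \<open>auto intro!: integrable_real_mult_indicator\<close>)
    finally show ?thesis .
  qed
  have nonneg: "0 \<le> a" "0 \<le> c" "0 \<le> m"
    unfolding a_def c_def m_def using f(2) by (auto intro!: integral_nonneg_AE)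
  have "ennreal (c * m) \<le> ennreal (a * (1 - m))"
    using cross nonneg unfolding nn_eq[OF B] nn_eq[OF B'] emeasure_eq_measure prob_compl[OF B]
    by (simp add: a_def c_def m_def ennreal_mult'[symmetric] prob_le_1)
  then have cross_real: "c * m \<le> a * (1 - m)"
    using nonneg prob_le_1[of B] by (simp add: ennreal_le_iff m_def)
  have "(\<integral>x. f x \<partial>M) = (\<integral>x. f x * indicator B x + f x * indicator (space M - B) x \<partial>M)"
    by (intro Bochner_Integration.integral_cong) (auto split: split_indicator)
  also have "\<dots> = a + c"
    unfolding a_def c_def
    by (intro Bochner_Integration.integral_add integrable_real_mult_indicator B B' f(1))
  finally have "(\<integral>x. f x \<partial>M) * m = a * m + c * m" by (simp add: algebra_simps)
  also have "\<dots> \<le> a" using cross_real by (simp add: algebra_simps)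
  finally show ?thesis by (simp add: a_def m_def)
qed

(* Replacing rho by t |-> rho |t| does not change the measure and makes the weight
   measurable on all of R; the rest combines the lemmas above. *)
theorem theorem2p1:
  fixes \<rho> :: "real \<Rightarrow> real" and f :: "'a::euclidean_space \<Rightarrow> real" and r :: real
  assumes rho_cont: "continuous_on {0..} \<rho>"
    and rho_pos: "\<And>t. 0 \<le> t \<Longrightarrow> 0 < \<rho> t"
    and prob: "prob_space (radial_measure \<rho> :: 'a measure)"
    and f: "f \<in> class_C"
    and r: "0 < r"
  shows "(\<integral>x. f x * indicator (cball 0 r) x \<partial>(radial_measure \<rho>))
           \<ge> (\<integral>x. f x \<partial>(radial_measure \<rho>)) * measure (radial_measure \<rho>) (cball (0::'a) r)"
proof -
  define w where "w t = \<rho> \<bar>t\<bar>" for t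
  have same_measure: "radial_measure \<rho> = (radial_measure w :: 'a measure)"
    by (simp add: radial_measure_def w_def)
  have "continuous_on UNIV w"
    unfolding w_def by (rule continuous_on_compose2[OF rho_cont]) (auto intro: continuous_intros)
  then have w_meas: "w \<in> borel_measurable borel" by (rule borel_measurable_continuous_onI)
  have "continuous_on UNIV f" and nonneg: "\<And>x. 0 \<le> f x" and peak: "\<And>x. f x \<le> f 0"
    and convex: "\<And>c. 0 < c \<Longrightarrow> convex {x. f x > c}"
    using f by (auto simp: class_C_def)
  then have f_meas: "f \<in> borel_measurable borel" by (blast intro: borel_measurable_continuous_onI)
  have prob_w: "prob_space (radial_measure w :: 'a measure)" using prob by (simp only: same_measure)
  moreover have "integrable (radial_measure w) f"
    using prob_w nonneg peak f_meas
    by (intro finite_measure.integrable_const_bound[where B = "f 0"] prob_space.finite_measure)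
       (auto simp: radial_measure_def)
  moreover have ray_antimono: "\<And>x s t. 0 < s \<Longrightarrow> s \<le> t \<Longrightarrow> f (t *\<^sub>R x) \<le> f (s *\<^sub>R x)"
    using superlevel_convex_ray_antimono[OF nonneg convex peak] by simp
  ultimately show ?thesis
    using radial_measure_cross_inequality[OF w_meas f_meas r ray_antimono] nonneg
    unfolding same_measure
    by (intro prob_space_cross_criterion) (auto simp: radial_measure_def Compl_eq_Diff_UNIV)
qed

end
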